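(* Fix an attacker label $A\in\mathcal{L}$. For all initial configurations $c_1,c_2$ of $\lambda^{dCG}$ (either both of the form $\langle\Sigma,pc,e\rangle$ evaluated with the forcing semantics, or both of the form $\langle\Sigma,pc,t\rangle$ evaluated with the thunk semantics), all environments $\theta_1,\theta_2$, and all final configurations $c_1',c_2'$: if $c_1\Downarrow^{\theta_1}c_1'$, $c_2\Downarrow^{\theta_2}c_2'$, $\theta_1\approx_A\theta_2$ and $c_1\approx_A c_2$, then $c_1'\approx_A c_2'$.
   Context: Fix a lattice $(\mathcal{L},\sqsubseteq,\sqcup)$ of labels. The coarse-grained calculus $\lambda^{dCG}$ has types $\tau::=\mathbf{unit}\mid\tau_1\to\tau_2\mid\tau_1+\tau_2\mid\tau_1\times\tau_2\mid\mathcal{L}\mid\mathbf{LIO}\,\tau\mid\mathbf{Labeled}\,\tau\mid\mathbf{Ref}\,\tau$ (standard simple type system), values $v::=()\mid(x.e,\theta)\mid\mathbf{inl}(v)\mid\mathbf{inr}(v)\mid(v_1,v_2)\mid\ell\mid\mathbf{Labeled}\,\ell\,v\mid(t,\theta)\mid n_\ell$, expressions $e::=x\mid\lambda x.e\mid e_1\,e_2\mid()\mid\ell\mid(e_1,e_2)\mid\mathbf{fst}(e)\mid\mathbf{snd}(e)\mid\mathbf{inl}(e)\mid\mathbf{inr}(e)\mid\mathbf{case}(e,x.e_1,x.e_2)\mid e_1\sqsubseteq^{?}e_2\mid t$, and thunks $t::=\mathbf{return}(e)\mid\mathbf{bind}(e,x.e)\mid\mathbf{unlabel}(e)\mid\mathbf{toLabeled}(e)\mid\mathbf{labelOf}(e)\mid\mathbf{getLabel}\mid\mathbf{taint}(e)\mid\mathbf{new}(e)\mid\,!e\mid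 e_1:=e_2\mid\mathbf{labelOfRef}(e)$. Environments $\theta$ are finite maps from variables to values; $(x.e,\theta)$ is a function closure and $(t,\theta)$ a thunk closure. Memories are finite lists $M$ of values ($|M|$ length, $M[n]$ entry, $M[n\mapsto v]$ replace/append at $n=|M|$); a store $\Sigma$ assigns a memory to each label. Pure semantics $e\Downarrow^{\theta}v$ (call-by-value, security-unaware): $x\Downarrow\theta(x)$; $()\Downarrow()$; $\ell\Downarrow\ell$; $\lambda x.e\Downarrow(x.e,\theta)$; $t\Downarrow(t,\theta)$ for a thunk $t$; $e_1\,e_2\Downarrow v$ if $e_1\Downarrow^{\theta}(x.e,\theta')$, $e_2\Downarrow^{\theta}v_2$, $e\Downarrow^{\theta'[x\mapsto v_2]}v$; pairs, projections and injections evaluate componentwise; $\mathbf{case}(e,x.e_1,x.e_2)\Downarrow v$ if $e\Downarrow^\theta\mathbf{inl}(v_1)$ and $e_1\Downarrow^{\theta[x\mapsto v_1]}v$, or $e\Downarrow^\theta\mathbf{inr}(v_2)$ and $e_2\Downarrow^{\theta[x\mapsto v_2]}v$; $e_1\sqsubseteq^{?}e_2$ evaluates both sides to labels $\ell_1,\ell_2$ and returns $\mathbf{inl}(())$ if $\ell_1\sqsubseteq\ell_2$, else $\mathbf{inr}(())$. Forcing semantics: $\langle\Sigma,pc,e\rangle\Downarrow^{\theta}\langle\Sigma',pc',v\rangle$ iff $e\Downarrow^{\theta}(t,\theta')$ and $\langle\Sigma,pc,t\rangle\Downarrow^{\theta'}\langle\Sigma',pc',v\rangle$. Thunk semantics (mutually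 defined): (Return) if $e\Downarrow^\theta v$ then $\langle\Sigma,pc,\mathbf{return}(e)\rangle\Downarrow^\theta\langle\Sigma,pc,v\rangle$. (Bind) if $\langle\Sigma,pc,e_1\rangle\Downarrow^\theta\langle\Sigma',pc',v_1\rangle$ and $\langle\Sigma',pc',e_2\rangle\Downarrow^{\theta[x\mapsto v_1]}\langle\Sigma'',pc'',v\rangle$ (forcing) then $\mathbf{bind}(e_1,x.e_2)$ yields $\langle\Sigma'',pc'',v\rangle$. (ToLabeled) if $\langle\Sigma,pc,e\rangle\Downarrow^\theta\langle\Sigma',pc',v\rangle$ then $\mathbf{toLabeled}(e)$ yields $\langle\Sigma',pc,\mathbf{Labeled}\,pc'\,v\rangle$. (Unlabel) if $e\Downarrow^\theta\mathbf{Labeled}\,\ell\,v$ then $\mathbf{unlabel}(e)$ yields $\langle\Sigma,pc\sqcup\ell,v\rangle$. (LabelOf) if $e\Downarrow^\theta\mathbf{Labeled}\,\ell\,v$ then $\mathbf{labelOf}(e)$ yields $\langle\Sigma,pc\sqcup\ell,\ell\rangle$. (GetLabel) yields $\langle\Sigma,pc,pc\rangle$. (Taint) if $e\Downarrow^\theta\ell$ then $\mathbf{taint}(e)$ yields $\langle\Sigma,pc\sqcup\ell,()\rangle$. (New) if $e\Downarrow^\theta\mathbf{Labeled}\,\ell\,v$, $pc\sqsubseteq\ell$, $n=|\Sigma(\ell)|$, then $\mathbf{new}(e)$ yields $\langle\Sigma[\ell\mapsto\Sigma(\ell)[n\mapsto v]],pc,n_\ell\rangle$. (Read) if $e\Downarrow^\theta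 n_\ell$ and $\Sigma(\ell)[n]=v$ then $!e$ yields $\langle\Sigma,pc\sqcup\ell,v\rangle$. (Write) if $e_1\Downarrow^\theta n_{\ell_1}$, $e_2\Downarrow^\theta\mathbf{Labeled}\,\ell_2\,v$, $\ell_2\sqsubseteq\ell_1$, $pc\sqsubseteq\ell_1$, then $e_1:=e_2$ yields $\langle\Sigma[\ell_1\mapsto\Sigma(\ell_1)[n\mapsto v]],pc,()\rangle$. (LabelOfRef) if $e\Downarrow^\theta n_\ell$ then $\mathbf{labelOfRef}(e)$ yields $\langle\Sigma,pc\sqcup\ell,\ell\rangle$. Final configurations are $\langle\Sigma,pc,v\rangle$. $A$-equivalence $\approx_A$ on values: $\mathbf{Labeled}\,\ell\,v_1\approx_A\mathbf{Labeled}\,\ell\,v_2$ if $\ell\sqsubseteq A$ and $v_1\approx_A v_2$; $\mathbf{Labeled}\,\ell_1\,v_1\approx_A\mathbf{Labeled}\,\ell_2\,v_2$ if $\ell_1,\ell_2\not\sqsubseteq A$; $()\approx_A()$, $\ell\approx_A\ell$; injections and pairs homomorphically (same injection, related components); function closures $(x.e_1,\theta_1)\approx_A(x.e_2,\theta_2)$ and thunk closures $(t_1,\theta_1)\approx_A(t_2,\theta_2)$ if the bodies are $\alpha$-equivalent and $\theta_1\approx_A\theta_2$ (same domain, pointwise related); $n_\ell\approx_A n_\ell$ if $\ell\sqsubseteq A$; $(n_1)_{\ell_1}\approx_A(n_2)_{\ell_2}$ if $\ell_1,\ell_2\not\sqsubseteq A$. Memories at label $\ell$: always related if $\ell\not\sqsubseteq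 A$, otherwise same length and pointwise related; stores pointwise. Initial configurations: $\langle\Sigma_1,pc_1,e_1\rangle\approx_A\langle\Sigma_2,pc_2,e_2\rangle$ iff $\Sigma_1\approx_A\Sigma_2$, $pc_1=pc_2$ and $e_1,e_2$ $\alpha$-equivalent (same for thunks). Final configurations: $\langle\Sigma_1,pc_1,v_1\rangle\approx_A\langle\Sigma_2,pc_2,v_2\rangle$ iff $\Sigma_1\approx_A\Sigma_2$ and either $pc_1\not\sqsubseteq A$ and $pc_2\not\sqsubseteq A$, or $pc_1=pc_2\sqsubseteq A$ and $v_1\approx_A v_2$. *)

theory Defs
  imports Main
begin

(* Labels: elements of a lattice type 'l; \<sqsubseteq> is \<le>, \<squnion> is sup.
   Variables are de Bruijn indices, so alpha-equivalence of bodies is syntactic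
   equality; an environment \<theta> is a list of values (index i \<mapsto> \<theta>!i). *)

datatype 'l exp =
    Var nat
  | Lam "'l exp"                       (* \<lambda>x.e, binds index 0 *)
  | App "'l exp" "'l exp"
  | UnitE
  | LabE 'l
  | PairE "'l exp" "'l exp"
  | Fst "'l exp"
  | Snd "'l exp"
  | InlE "'l exp"
  | InrE "'l exp"
  | Case "'l exp" "'l exp" "'l exp"   (* case(e, x.e1, x.e2), e1/e2 bind index 0 *)
  | LeqQ "'l exp" "'l exp"
  | ThunkE "'l thunk"
and 'l thunk =
    Return "'l exp"
  | Bind "'l exp" "'l exp"            (* bind(e1, x.e2), e2 binds index 0 *)
  | Unlabel "'l exp"
  | ToLabeled "'l exp"
  | LabelOf "'l exp"
  | GetLabel
  | Taint "'l exp"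
  | New "'l exp"
  | Read "'l exp"
  | Write "'l exp" "'l exp"
  | LabelOfRef "'l exp"

datatype 'l val =
    VUnit
  | VClos "'l exp" "'l val list"
  | VInl "'l val"
  | VInr "'l val"
  | VPair "'l val" "'l val"
  | VLab 'l
  | VLabeled 'l "'l val"
  | VThunk "'l thunk" "'l val list"
  | VRef nat 'l

type_synonym 'l env = "'l val list"
type_synonym 'l mem = "'l val list"
type_synonym 'l store = "'l \<Rightarrow> 'l mem"

inductive pure_eval :: "'l::lattice env \<Rightarrow> 'l exp \<Rightarrow> 'l val \<Rightarrow> bool" where
  PVar: "i < length \<theta> \<Longrightarrow> pure_eval \<theta> (Var i) (\<theta> ! i)"
| PUnit: "pure_eval \<theta> UnitE VUnit"
| PLab: "pure_eval \<theta> (LabE l) (VLab l)"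
| PLam: "pure_eval \<theta> (Lam e) (VClos e \<theta>)"
| PThunk: "pure_eval \<theta> (ThunkE t) (VThunk t \<theta>)"
| PApp: "pure_eval \<theta> e1 (VClos e \<theta>') \<Longrightarrow> pure_eval \<theta> e2 v2 \<Longrightarrow>
         pure_eval (v2 # \<theta>') e v \<Longrightarrow> pure_eval \<theta> (App e1 e2) v"
| PPair: "pure_eval \<theta> e1 v1 \<Longrightarrow> pure_eval \<theta> e2 v2 \<Longrightarrow> pure_eval \<theta> (PairE e1 e2) (VPair v1 v2)"
| PFst: "pure_eval \<theta> e (VPair v1 v2) \<Longrightarrow> pure_eval \<theta> (Fst e) v1"
| PSnd: "pure_eval \<theta> e (VPair v1 v2) \<Longrightarrow> pure_eval \<theta> (Snd e) v2"
| PInl: "pure_eval \<theta> e v \<Longrightarrow> pure_eval \<theta> (InlE e) (VInl v)"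
| PInr: "pure_eval \<theta> e v \<Longrightarrow> pure_eval \<theta> (InrE e) (VInr v)"
| PCaseL: "pure_eval \<theta> e (VInl v1) \<Longrightarrow> pure_eval (v1 # \<theta>) e1 v \<Longrightarrow>
           pure_eval \<theta> (Case e e1 e2) v"
| PCaseR: "pure_eval \<theta> e (VInr v2) \<Longrightarrow> pure_eval (v2 # \<theta>) e2 v \<Longrightarrow>
           pure_eval \<theta> (Case e e1 e2) v"
| PLeqT: "pure_eval \<theta> e1 (VLab l1) \<Longrightarrow> pure_eval \<theta> e2 (VLab l2) \<Longrightarrow> l1 \<le> l2 \<Longrightarrow>
          pure_eval \<theta> (LeqQ e1 e2) (VInl VUnit)"
| PLeqF: "pure_eval \<theta> e1 (VLab l1) \<Longrightarrow> pure_eval \<theta> e2 (VLab l2) \<Longrightarrow> \<not> l1 \<le> l2 \<Longrightarrow>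
          pure_eval \<theta> (LeqQ e1 e2) (VInr VUnit)"

(* M[n \<mapsto> v]: replace entry n, or append when n = |M| (only defined for n \<le> |M|) *)
definition mem_upd :: "'a list \<Rightarrow> nat \<Rightarrow> 'a \<Rightarrow> 'a list" where
  "mem_upd M n v = (if n < length M then M[n := v] else M @ [v])"

inductive force_eval :: "'l::lattice env \<Rightarrow> 'l store \<Rightarrow> 'l \<Rightarrow> 'l exp \<Rightarrow> 'l store \<Rightarrow> 'l \<Rightarrow> 'l val \<Rightarrow> bool"
  and thunk_eval :: "'l::lattice env \<Rightarrow> 'l store \<Rightarrow> 'l \<Rightarrow> 'l thunk \<Rightarrow> 'l store \<Rightarrow> 'l \<Rightarrow> 'l val \<Rightarrow> bool"
where
  Force: "pure_eval \<theta> e (VThunk t \<theta>') \<Longrightarrow> thunk_eval \<theta>' \<Sigma> pc t \<Sigma>' pc' v \<Longrightarrow>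
          force_eval \<theta> \<Sigma> pc e \<Sigma>' pc' v"
| TReturn: "pure_eval \<theta> e v \<Longrightarrow> thunk_eval \<theta> \<Sigma> pc (Return e) \<Sigma> pc v"
| TBind: "force_eval \<theta> \<Sigma> pc e1 \<Sigma>' pc' v1 \<Longrightarrow> force_eval (v1 # \<theta>) \<Sigma>' pc' e2 \<Sigma>'' pc'' v \<Longrightarrow>
          thunk_eval \<theta> \<Sigma> pc (Bind e1 e2) \<Sigma>'' pc'' v"
| TToLabeled: "force_eval \<theta> \<Sigma> pc e \<Sigma>' pc' v \<Longrightarrow>
          thunk_eval \<theta> \<Sigma> pc (ToLabeled e) \<Sigma>' pc (VLabeled pc' v)"
| TUnlabel: "pure_eval \<theta> e (VLabeled l v) \<Longrightarrow>
          thunk_eval \<theta> \<Sigma> pc (Unlabel e) \<Sigma> (sup pc l) v"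
| TLabelOf: "pure_eval \<theta> e (VLabeled l v) \<Longrightarrow>
          thunk_eval \<theta> \<Sigma> pc (LabelOf e) \<Sigma> (sup pc l) (VLab l)"
| TGetLabel: "thunk_eval \<theta> \<Sigma> pc GetLabel \<Sigma> pc (VLab pc)"
| TTaint: "pure_eval \<theta> e (VLab l) \<Longrightarrow>
          thunk_eval \<theta> \<Sigma> pc (Taint e) \<Sigma> (sup pc l) VUnit"
| TNew: "pure_eval \<theta> e (VLabeled l v) \<Longrightarrow> pc \<le> l \<Longrightarrow> n = length (\<Sigma> l) \<Longrightarrow>
          thunk_eval \<theta> \<Sigma> pc (New e) (\<Sigma>(l := mem_upd (\<Sigma> l) n v)) pc (VRef n l)"
| TRead: "pure_eval \<theta> e (VRef n l) \<Longrightarrow> n < length (\<Sigma> l) \<Longrightarrow> \<Sigma> l ! n = v \<Longrightarrow>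
          thunk_eval \<theta> \<Sigma> pc (Read e) \<Sigma> (sup pc l) v"
| TWrite: "pure_eval \<theta> e1 (VRef n l1) \<Longrightarrow> pure_eval \<theta> e2 (VLabeled l2 v) \<Longrightarrow>
          l2 \<le> l1 \<Longrightarrow> pc \<le> l1 \<Longrightarrow> n \<le> length (\<Sigma> l1) \<Longrightarrow>
          thunk_eval \<theta> \<Sigma> pc (Write e1 e2) (\<Sigma>(l1 := mem_upd (\<Sigma> l1) n v)) pc VUnit"
| TLabelOfRef: "pure_eval \<theta> e (VRef n l) \<Longrightarrow>
          thunk_eval \<theta> \<Sigma> pc (LabelOfRef e) \<Sigma> (sup pc l) (VLab l)"

inductive val_eq :: "'l::lattice \<Rightarrow> 'l val \<Rightarrow> 'l val \<Rightarrow> bool" where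
  EqLabeledLow: "l \<le> A \<Longrightarrow> val_eq A v1 v2 \<Longrightarrow> val_eq A (VLabeled l v1) (VLabeled l v2)"
| EqLabeledHigh: "\<not> l1 \<le> A \<Longrightarrow> \<not> l2 \<le> A \<Longrightarrow> val_eq A (VLabeled l1 v1) (VLabeled l2 v2)"
| EqUnit: "val_eq A VUnit VUnit"
| EqLab: "val_eq A (VLab l) (VLab l)"
| EqInl: "val_eq A v1 v2 \<Longrightarrow> val_eq A (VInl v1) (VInl v2)"
| EqInr: "val_eq A v1 v2 \<Longrightarrow> val_eq A (VInr v1) (VInr v2)"
| EqPair: "val_eq A v1 v2 \<Longrightarrow> val_eq A w1 w2 \<Longrightarrow> val_eq A (VPair v1 w1) (VPair v2 w2)"
| EqClos: "list_all2 (val_eq A) \<theta>1 \<theta>2 \<Longrightarrow> val_eq A (VClos e \<theta>1) (VClos e \<theta>2)"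
| EqThunk: "list_all2 (val_eq A) \<theta>1 \<theta>2 \<Longrightarrow> val_eq A (VThunk t \<theta>1) (VThunk t \<theta>2)"
| EqRefLow: "l \<le> A \<Longrightarrow> val_eq A (VRef n l) (VRef n l)"
| EqRefHigh: "\<not> l1 \<le> A \<Longrightarrow> \<not> l2 \<le> A \<Longrightarrow> val_eq A (VRef n1 l1) (VRef n2 l2)"

definition env_eq :: "'l::lattice \<Rightarrow> 'l env \<Rightarrow> 'l env \<Rightarrow> bool" where
  "env_eq A \<theta>1 \<theta>2 \<longleftrightarrow> list_all2 (val_eq A) \<theta>1 \<theta>2"

definition mem_eq :: "'l::lattice \<Rightarrow> 'l \<Rightarrow> 'l mem \<Rightarrow> 'l mem \<Rightarrow> bool" where
  "mem_eq A l M1 M2 \<longleftrightarrow> (\<not> l \<le> A \<or> list_all2 (val_eq A) M1 M2)"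

definition store_eq :: "'l::lattice \<Rightarrow> 'l store \<Rightarrow> 'l store \<Rightarrow> bool" where
  "store_eq A \<Sigma>1 \<Sigma>2 \<longleftrightarrow> (\<forall>l. mem_eq A l (\<Sigma>1 l) (\<Sigma>2 l))"

(* initial configurations (expressions or thunks); alpha-equivalence = equality (de Bruijn) *)
definition init_eq :: "'l::lattice \<Rightarrow> 'l store \<times> 'l \<times> 'a \<Rightarrow> 'l store \<times> 'l \<times> 'a \<Rightarrow> bool" where
  "init_eq A c1 c2 \<longleftrightarrow> (case (c1, c2) of ((\<Sigma>1, pc1, e1), (\<Sigma>2, pc2, e2)) \<Rightarrow>
      store_eq A \<Sigma>1 \<Sigma>2 \<and> pc1 = pc2 \<and> e1 = e2)"

definition final_eq :: "'l::lattice \<Rightarrow> 'l store \<times> 'l \<times> 'l val \<Rightarrow> 'l store \<times> 'l \<times> 'l val \<Rightarrow> bool" where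
  "final_eq A c1 c2 \<longleftrightarrow> (case (c1, c2) of ((\<Sigma>1, pc1, v1), (\<Sigma>2, pc2, v2)) \<Rightarrow>
      store_eq A \<Sigma>1 \<Sigma>2 \<and>
      ((\<not> pc1 \<le> A \<and> \<not> pc2 \<le> A) \<or> (pc1 = pc2 \<and> pc1 \<le> A \<and> val_eq A v1 v2)))"

end

theory Submission
  imports Defs
begin

(* Both runs execute the same program, so an induction on the first derivation, inverting the
   second one at each step, keeps them in lockstep: pure subexpressions evaluate to A-equivalent
   values in A-equivalent environments, and while the program counter is observable (below A) it
   is the same in both runs. The runs can only drift apart once the program counter has become
   secret, and from then on confinement takes over: the program counter never decreases, and a
   computation running at pc writes only into memories labelled above pc (New and Write check
   this), so neither run touches an observable memory again and the final configurations are
   equivalent whatever the runs compute. *)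

inductive_simps val_eq_simps:
  "val_eq A VUnit w" "val_eq A (VLabeled l v) w" "val_eq A (VLab l) w" "val_eq A (VInl v) w"
  "val_eq A (VInr v) w" "val_eq A (VPair v1 v2) w" "val_eq A (VClos e \<theta>) w"
  "val_eq A (VThunk t \<theta>) w" "val_eq A (VRef n l) w"

inductive_cases pure_eval_elims:
  "pure_eval \<theta> (Var i) v" "pure_eval \<theta> UnitE v" "pure_eval \<theta> (LabE l) v"
  "pure_eval \<theta> (Lam e) v" "pure_eval \<theta> (ThunkE t) v" "pure_eval \<theta> (App e1 e2) v"
  "pure_eval \<theta> (PairE e1 e2) v" "pure_eval \<theta> (Fst e) v" "pure_eval \<theta> (Snd e) v"
  "pure_eval \<theta> (InlE e) v" "pure_eval \<theta> (InrE e) v" "pure_eval \<theta> (Case e e1 e2) v"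
  "pure_eval \<theta> (LeqQ e1 e2) v"

inductive_cases force_evalE: "force_eval \<theta> \<Sigma> pc e \<Sigma>' pc' v"

inductive_cases thunk_eval_elims:
  "thunk_eval \<theta> \<Sigma> pc (Return e) \<Sigma>' pc' v" "thunk_eval \<theta> \<Sigma> pc (Bind e1 e2) \<Sigma>' pc' v"
  "thunk_eval \<theta> \<Sigma> pc (ToLabeled e) \<Sigma>' pc' v" "thunk_eval \<theta> \<Sigma> pc (Unlabel e) \<Sigma>' pc' v"
  "thunk_eval \<theta> \<Sigma> pc (LabelOf e) \<Sigma>' pc' v" "thunk_eval \<theta> \<Sigma> pc GetLabel \<Sigma>' pc' v"
  "thunk_eval \<theta> \<Sigma> pc (Taint e) \<Sigma>' pc' v" "thunk_eval \<theta> \<Sigma> pc (New e) \<Sigma>' pc' v"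
  "thunk_eval \<theta> \<Sigma> pc (Read e) \<Sigma>' pc' v" "thunk_eval \<theta> \<Sigma> pc (Write e1 e2) \<Sigma>' pc' v"
  "thunk_eval \<theta> \<Sigma> pc (LabelOfRef e) \<Sigma>' pc' v"

lemma pure_eval_val_eq:
  assumes "pure_eval \<theta>1 e v1" "pure_eval \<theta>2 e v2" "list_all2 (val_eq A) \<theta>1 \<theta>2"
  shows "val_eq A v1 v2"
  using assms
  by (induction arbitrary: \<theta>2 v2 rule: pure_eval.induct)
    (erule pure_eval_elims; fastforce simp: val_eq_simps dest: list_all2_nthD)+

lemma eval_confinement:
  shows "force_eval \<theta> \<Sigma> pc e \<Sigma>' pc' v \<Longrightarrow> pc \<le> pc' \<and> (\<forall>l. \<not> pc \<le> l \<longrightarrow> \<Sigma>' l = \<Sigma> l)"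
    and "thunk_eval \<theta> \<Sigma> pc t \<Sigma>' pc' v \<Longrightarrow> pc \<le> pc' \<and> (\<forall>l. \<not> pc \<le> l \<longrightarrow> \<Sigma>' l = \<Sigma> l)"
  by (induction rule: force_eval_thunk_eval.inducts) (auto intro: order_trans le_supI1)

lemma final_eq_high_pc:
  assumes "store_eq A \<Sigma>1 \<Sigma>2" "\<not> pc1 \<le> A" "\<not> pc2 \<le> A"
    and "force_eval \<theta>1 \<Sigma>1 pc1 e1 \<Sigma>1' pc1' v1" "force_eval \<theta>2 \<Sigma>2 pc2 e2 \<Sigma>2' pc2' v2"
  shows "final_eq A (\<Sigma>1', pc1', v1) (\<Sigma>2', pc2', v2)"
proof -
  from eval_confinement(1)[OF assms(4)] eval_confinement(1)[OF assms(5)]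
  have "pc1 \<le> pc1'" "pc2 \<le> pc2'"
    and "\<forall>l. \<not> pc1 \<le> l \<longrightarrow> \<Sigma>1' l = \<Sigma>1 l" "\<forall>l. \<not> pc2 \<le> l \<longrightarrow> \<Sigma>2' l = \<Sigma>2 l"
    by auto
  moreover have "\<not> pc1 \<le> l" "\<not> pc2 \<le> l" if "l \<le> A" for l
    using assms(2,3) that order_trans by blast+
  ultimately show ?thesis
    using assms(1-3) order_trans unfolding final_eq_def store_eq_def mem_eq_def by fastforce
qed

lemma list_all2_mem_upd:
  "list_all2 P M1 M2 \<Longrightarrow> P v1 v2 \<Longrightarrow> list_all2 P (mem_upd M1 n v1) (mem_upd M2 n v2)"
  by (auto simp: mem_upd_def list_all2_lengthD intro: list_all2_update_cong list_all2_appendI)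

lemma store_eq_mem_upd:
  assumes "store_eq A \<Sigma>1 \<Sigma>2" "val_eq A (VRef n1 l1) (VRef n2 l2)" "l1 \<le> A \<Longrightarrow> val_eq A v1 v2"
  shows "store_eq A (\<Sigma>1(l1 := mem_upd (\<Sigma>1 l1) n1 v1)) (\<Sigma>2(l2 := mem_upd (\<Sigma>2 l2) n2 v2))"
  using assms by (auto simp: val_eq_simps store_eq_def mem_eq_def intro: list_all2_mem_upd)

lemma val_eq_deref:
  assumes "store_eq A \<Sigma>1 \<Sigma>2" "val_eq A (VRef n1 l1) (VRef n2 l2)" "l1 \<le> A" "n1 < length (\<Sigma>1 l1)"
  shows "val_eq A (\<Sigma>1 l1 ! n1) (\<Sigma>2 l2 ! n2)"
  using assms by (auto simp: val_eq_simps store_eq_def mem_eq_def dest: list_all2_nthD)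

lemma val_eq_fresh_ref:
  assumes "store_eq A \<Sigma>1 \<Sigma>2" "l1 \<le> A \<or> l2 \<le> A \<Longrightarrow> l1 = l2"
  shows "val_eq A (VRef (length (\<Sigma>1 l1)) l1) (VRef (length (\<Sigma>2 l2)) l2)"
  using assms by (force simp: val_eq_simps store_eq_def mem_eq_def dest: list_all2_lengthD)

lemma New_noninterference:
  assumes run1: "thunk_eval \<theta>1 \<Sigma>1 pc (New e) \<Sigma>1' pc1' v1"
    and run2: "thunk_eval \<theta>2 \<Sigma>2 pc (New e) \<Sigma>2' pc2' v2"
    and envs: "list_all2 (val_eq A) \<theta>1 \<theta>2" and stores: "store_eq A \<Sigma>1 \<Sigma>2"
  shows "final_eq A (\<Sigma>1', pc1', v1) (\<Sigma>2', pc2', v2)"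
proof -
  from run1 obtain l1 w1 where eval1: "pure_eval \<theta>1 e (VLabeled l1 w1)"
    and "\<Sigma>1' = \<Sigma>1(l1 := mem_upd (\<Sigma>1 l1) (length (\<Sigma>1 l1)) w1)" "pc1' = pc"
      "v1 = VRef (length (\<Sigma>1 l1)) l1"
    by (rule thunk_eval_elims)
  moreover from run2 obtain l2 w2 where eval2: "pure_eval \<theta>2 e (VLabeled l2 w2)"
    and "\<Sigma>2' = \<Sigma>2(l2 := mem_upd (\<Sigma>2 l2) (length (\<Sigma>2 l2)) w2)" "pc2' = pc"
      "v2 = VRef (length (\<Sigma>2 l2)) l2"
    by (rule thunk_eval_elims)
  moreover have "val_eq A (VLabeled l1 w1) (VLabeled l2 w2)"
    using eval1 eval2 envs by (rule pure_eval_val_eq)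
  then have same_label: "l1 \<le> A \<or> l2 \<le> A \<Longrightarrow> l1 = l2"
    and payload: "l1 \<le> A \<Longrightarrow> val_eq A w1 w2"
    by (auto simp: val_eq_simps)
  moreover note ref = val_eq_fresh_ref[OF stores same_label]
  ultimately show ?thesis
    using store_eq_mem_upd[OF stores ref payload] by (simp add: final_eq_def)
qed

lemma Read_noninterference:
  assumes run1: "thunk_eval \<theta>1 \<Sigma>1 pc (Read e) \<Sigma>1' pc1' v1"
    and run2: "thunk_eval \<theta>2 \<Sigma>2 pc (Read e) \<Sigma>2' pc2' v2"
    and envs: "list_all2 (val_eq A) \<theta>1 \<theta>2" and stores: "store_eq A \<Sigma>1 \<Sigma>2"
  shows "final_eq A (\<Sigma>1', pc1', v1) (\<Sigma>2', pc2', v2)"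
proof -
  from run1 obtain n1 l1 where eval1: "pure_eval \<theta>1 e (VRef n1 l1)"
    and "n1 < length (\<Sigma>1 l1)" "\<Sigma>1' = \<Sigma>1" "pc1' = sup pc l1" "\<Sigma>1 l1 ! n1 = v1"
    by (rule thunk_eval_elims)
  moreover from run2 obtain n2 l2 where eval2: "pure_eval \<theta>2 e (VRef n2 l2)"
    and "\<Sigma>2' = \<Sigma>2" "pc2' = sup pc l2" "\<Sigma>2 l2 ! n2 = v2"
    by (rule thunk_eval_elims) blast
  moreover have ref: "val_eq A (VRef n1 l1) (VRef n2 l2)"
    using eval1 eval2 envs by (rule pure_eval_val_eq)
  moreover note val_eq_deref[OF stores ref]
  ultimately show ?thesis using stores by (auto simp: final_eq_def val_eq_simps)
qed

lemma Write_noninterference: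
  assumes run1: "thunk_eval \<theta>1 \<Sigma>1 pc (Write e1 e2) \<Sigma>1' pc1' v1"
    and run2: "thunk_eval \<theta>2 \<Sigma>2 pc (Write e1 e2) \<Sigma>2' pc2' v2"
    and envs: "list_all2 (val_eq A) \<theta>1 \<theta>2" and stores: "store_eq A \<Sigma>1 \<Sigma>2"
  shows "final_eq A (\<Sigma>1', pc1', v1) (\<Sigma>2', pc2', v2)"
proof -
  from run1 obtain n1 l1 k1 w1 where eval1: "pure_eval \<theta>1 e1 (VRef n1 l1)"
    "pure_eval \<theta>1 e2 (VLabeled k1 w1)" and "k1 \<le> l1"
    and "\<Sigma>1' = \<Sigma>1(l1 := mem_upd (\<Sigma>1 l1) n1 w1)" "pc1' = pc" "v1 = VUnit"
    by (rule thunk_eval_elims)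
  moreover from run2 obtain n2 l2 k2 w2 where eval2: "pure_eval \<theta>2 e1 (VRef n2 l2)"
    "pure_eval \<theta>2 e2 (VLabeled k2 w2)"
    and "\<Sigma>2' = \<Sigma>2(l2 := mem_upd (\<Sigma>2 l2) n2 w2)" "pc2' = pc" "v2 = VUnit"
    by (rule thunk_eval_elims) blast
  moreover have ref: "val_eq A (VRef n1 l1) (VRef n2 l2)"
    using eval1(1) eval2(1) envs by (rule pure_eval_val_eq)
  moreover have "val_eq A (VLabeled k1 w1) (VLabeled k2 w2)"
    using eval1(2) eval2(2) envs by (rule pure_eval_val_eq)
  with \<open>k1 \<le> l1\<close> have "l1 \<le> A \<Longrightarrow> val_eq A w1 w2"
    by (auto simp: val_eq_simps dest: order_trans)
  note store_eq_mem_upd[OF stores ref this]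
  ultimately show ?thesis by (simp add: final_eq_def val_eq_simps)
qed

lemma eval_noninterference:
  shows "force_eval \<theta>1 \<Sigma>1 pc e \<Sigma>1' pc1' v1 \<Longrightarrow> force_eval \<theta>2 \<Sigma>2 pc e \<Sigma>2' pc2' v2 \<Longrightarrow>
      list_all2 (val_eq A) \<theta>1 \<theta>2 \<Longrightarrow> store_eq A \<Sigma>1 \<Sigma>2 \<Longrightarrow>
      final_eq A (\<Sigma>1', pc1', v1) (\<Sigma>2', pc2', v2)"
    and "thunk_eval \<theta>1 \<Sigma>1 pc t \<Sigma>1' pc1' v1 \<Longrightarrow> thunk_eval \<theta>2 \<Sigma>2 pc t \<Sigma>2' pc2' v2 \<Longrightarrow>
      list_all2 (val_eq A) \<theta>1 \<theta>2 \<Longrightarrow> store_eq A \<Sigma>1 \<Sigma>2 \<Longrightarrow>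
      final_eq A (\<Sigma>1', pc1', v1) (\<Sigma>2', pc2', v2)"
proof (induction \<theta>1 \<Sigma>1 pc e \<Sigma>1' pc1' v1 and \<theta>1 \<Sigma>1 pc t \<Sigma>1' pc1' v1
    arbitrary: \<theta>2 \<Sigma>2 \<Sigma>2' pc2' v2 and \<theta>2 \<Sigma>2 \<Sigma>2' pc2' v2 rule: force_eval_thunk_eval.inducts)
  case (Force \<theta>1 e t \<theta>1' \<Sigma>1 pc \<Sigma>1' pc1' v1)
  from Force.prems(1) obtain t2 \<theta>2' where
    "pure_eval \<theta>2 e (VThunk t2 \<theta>2')" "thunk_eval \<theta>2' \<Sigma>2 pc t2 \<Sigma>2' pc2' v2"
    by (rule force_evalE)
  with Force show ?case by (fastforce simp: val_eq_simps dest: pure_eval_val_eq)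
next
  case (TBind \<theta>1 \<Sigma>1 pc e1 \<Sigma>1m pc1m w1 e2 \<Sigma>1' pc1' v1)
  from TBind.prems(1) obtain \<Sigma>2m pc2m w2 where run2:
    "force_eval \<theta>2 \<Sigma>2 pc e1 \<Sigma>2m pc2m w2" "force_eval (w2 # \<theta>2) \<Sigma>2m pc2m e2 \<Sigma>2' pc2' v2"
    by (rule thunk_eval_elims)
  have "final_eq A (\<Sigma>1m, pc1m, w1) (\<Sigma>2m, pc2m, w2)"
    using TBind.IH(1) run2(1) TBind.prems(2,3) .
  then have stores: "store_eq A \<Sigma>1m \<Sigma>2m"
    and low: "pc1m \<le> A \<Longrightarrow> pc2m = pc1m \<and> val_eq A w1 w2"
    and high: "\<not> pc1m \<le> A \<Longrightarrow> \<not> pc2m \<le> A"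
    by (auto simp: final_eq_def)
  show ?case
  proof (cases "pc1m \<le> A")
    case True
    with low run2(2) TBind.prems(2) show ?thesis by (auto intro: TBind.IH(2) stores)
  next
    case False
    show ?thesis
      using stores False high[OF False] TBind.hyps(2) run2(2) by (rule final_eq_high_pc)
  qed
next
  case (TNew \<theta>1 e l1 v1 pc n1 \<Sigma>1)
  show ?case
    using TNew.prems
    by (rule New_noninterference[OF force_eval_thunk_eval.TNew[where \<Sigma> = \<Sigma>1, OF TNew.hyps]])
next
  case (TRead \<theta>1 e n1 l1 \<Sigma>1 v1 pc)
  show ?case
    using TRead.prems
    by (rule Read_noninterference[OF force_eval_thunk_eval.TRead[where \<Sigma> = \<Sigma>1, OF TRead.hyps]])
next
  case (TWrite \<theta>1 e1 n1 l1 e2 k1 v1 pc \<Sigma>1)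
  show ?case
    using TWrite.prems
    by (rule Write_noninterference[OF force_eval_thunk_eval.TWrite[where \<Sigma> = \<Sigma>1, OF TWrite.hyps]])
qed (fastforce elim!: thunk_eval_elims simp: final_eq_def val_eq_simps dest: pure_eval_val_eq)+

theorem mainTheorem2:
  fixes A :: "'l::lattice"
  shows "(\<forall>\<Sigma>1 pc1 e1 \<Sigma>2 pc2 e2 \<theta>1 \<theta>2 \<Sigma>1' pc1' v1 \<Sigma>2' pc2' v2.
            force_eval \<theta>1 \<Sigma>1 pc1 e1 \<Sigma>1' pc1' v1 \<longrightarrow>
            force_eval \<theta>2 \<Sigma>2 pc2 e2 \<Sigma>2' pc2' v2 \<longrightarrow>
            env_eq A \<theta>1 \<theta>2 \<longrightarrow>
            init_eq A (\<Sigma>1, pc1, e1) (\<Sigma>2, pc2, e2) \<longrightarrow>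
            final_eq A (\<Sigma>1', pc1', v1) (\<Sigma>2', pc2', v2))
       \<and> (\<forall>\<Sigma>1 pc1 t1 \<Sigma>2 pc2 t2 \<theta>1 \<theta>2 \<Sigma>1' pc1' v1 \<Sigma>2' pc2' v2.
            thunk_eval \<theta>1 \<Sigma>1 pc1 t1 \<Sigma>1' pc1' v1 \<longrightarrow>
            thunk_eval \<theta>2 \<Sigma>2 pc2 t2 \<Sigma>2' pc2' v2 \<longrightarrow>
            env_eq A \<theta>1 \<theta>2 \<longrightarrow>
            init_eq A (\<Sigma>1, pc1, t1) (\<Sigma>2, pc2, t2) \<longrightarrow>
            final_eq A (\<Sigma>1', pc1', v1) (\<Sigma>2', pc2', v2))"
  using eval_noninterference[where A = A] unfolding env_eq_def init_eq_def by auto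

end
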